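(* Let $R\in\mathcal L(\mathcal H)$, $u,v\in\mathcal H$, $T=R+(\cdot,v)u$, $V\in\mathcal L(\mathcal K)$, and $Y\in\mathcal L(\mathcal K,\mathcal H)$ with $\ker Y=\{0\}$ and $TY=YV$. If $v$ is a cyclic vector for $R^\ast$, then $Y^\ast v$ is a cyclic vector for $V^\ast$.
   Context: $(\cdot,v)u$ denotes $x\mapsto(x,v)u$. A vector $x$ is cyclic for an operator $A$ if the closed linear span of $\{A^nx:n\geq0\}$ is the whole space. *)

theory Defs
  imports "HOL-Analysis.Analysis"
begin

class chilbert_space = banach +
  fixes cscale :: "complex \<Rightarrow> 'a \<Rightarrow> 'a"
    and cinner :: "'a \<Rightarrow> 'a \<Rightarrow> complex"
  assumes cscale_add_right: "cscale c (x + y) = cscale c x + cscale c y"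
    and cscale_add_left: "cscale (a + b) x = cscale a x + cscale b x"
    and cscale_cscale: "cscale a (cscale b x) = cscale (a * b) x"
    and cscale_of_real: "cscale (complex_of_real r) x = scaleR r x"
    and cinner_add_left: "cinner (x + y) z = cinner x z + cinner y z"
    and cinner_cscale_left: "cinner (cscale c x) y = c * cinner x y"
    and cinner_commute: "cinner y x = cnj (cinner x y)"
    and cinner_self_norm: "cinner x x = complex_of_real ((norm x)\<^sup>2)"

definition cbounded_linear :: "('a::chilbert_space \<Rightarrow> 'b::chilbert_space) \<Rightarrow> bool" where
  "cbounded_linear f \<longleftrightarrow> bounded_linear f \<and> (\<forall>c x. f (cscale c x) = cscale c (f x))"

definition is_adjoint :: "('a::chilbert_space \<Rightarrow> 'b::chilbert_space) \<Rightarrow> ('b \<Rightarrow> 'a) \<Rightarrow> bool" where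
  "is_adjoint A B \<longleftrightarrow> (\<forall>x y. cinner (A x) y = cinner x (B y))"

definition cyclic_vector :: "('a::chilbert_space \<Rightarrow> 'a) \<Rightarrow> 'a \<Rightarrow> bool" where
  "cyclic_vector A x \<longleftrightarrow>
     closure {(\<Sum>n<N. cscale (c n) ((A ^^ n) x)) | N c. True} = UNIV"

end

theory Submission
  imports Defs
begin

text \<open>A vector \<open>x\<close> is cyclic for an arbitrary map \<open>A\<close> exactly when no nonzero vector is
  orthogonal to all \<open>A\<^sup>n x\<close>; one direction is the projection theorem. Passing to adjoints,
  \<open>T Y = Y V\<close> becomes \<open>Y\<^sup>* T\<^sup>* = V\<^sup>* Y\<^sup>*\<close> with \<open>T\<^sup>* = R\<^sup>* + (\<cdot>,u)v\<close>. The smallest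
  \<open>T\<^sup>*\<close>-invariant subspace containing \<open>v\<close> is also \<open>R\<^sup>*\<close>-invariant, so \<open>v\<close> is cyclic for \<open>T\<^sup>*\<close>.
  Finally, if \<open>w \<perp> V\<^sup>*\<^sup>n Y\<^sup>* v = Y\<^sup>* T\<^sup>*\<^sup>n v\<close> for all \<open>n\<close>, then \<open>Y w \<perp> T\<^sup>*\<^sup>n v\<close>, so \<open>Y w = 0\<close>
  and \<open>w = 0\<close>.\<close>

lemma cscale_zero_left [simp]: "cscale 0 x = 0"
  using cscale_of_real[of 0 x] by simp

lemma cscale_one [simp]: "cscale 1 x = x"
  using cscale_of_real[of 1 x] by simp

lemma cscale_zero_right [simp]: "cscale c 0 = 0"
  using cscale_add_right[of c 0 0] by simp

lemma cscale_minus_left: "cscale (- c) x = - cscale c x"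
  using cscale_add_left[of c "- c" x] by (simp add: eq_neg_iff_add_eq_0 add.commute)

lemma cinner_zero_left [simp]: "cinner 0 y = 0"
  using cinner_add_left[of 0 0 y] by simp

lemma cinner_minus_left: "cinner (- x) y = - cinner x y"
  using cinner_add_left[of x "- x" y] by (simp add: eq_neg_iff_add_eq_0 add.commute)

lemma cinner_diff_left: "cinner (x - y) z = cinner x z - cinner y z"
  using cinner_add_left[of x "- y" z] by (simp add: cinner_minus_left)

lemma cinner_add_right: "cinner x (y + z) = cinner x y + cinner x z"
  by (metis cinner_commute cinner_add_left complex_cnj_add)

lemma cinner_cscale_right: "cinner x (cscale c y) = cnj c * cinner x y"
  by (metis cinner_commute cinner_cscale_left complex_cnj_mult)

lemma cinner_zero_right [simp]: "cinner x 0 = 0"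
  by (metis cinner_commute cinner_zero_left complex_cnj_zero)

lemma cinner_diff_right: "cinner x (y - z) = cinner x y - cinner x z"
  by (metis cinner_commute cinner_diff_left complex_cnj_diff)

lemma cinner_self_eq_0 [simp]: "cinner x x = 0 \<longleftrightarrow> x = 0"
  using cinner_self_norm[of x] by simp

lemma cinner_extensional: "(\<And>k. cinner k a = cinner k b) \<Longrightarrow> a = b"
  by (metis cinner_diff_right cinner_self_eq_0 eq_iff_diff_eq_0)

lemma Re_cinner_self: "Re (cinner x x) = (norm x)\<^sup>2"
  using cinner_self_norm[of x] by simp

lemma norm_add_square_cinner:
  "(norm (a + b))\<^sup>2 = (norm a)\<^sup>2 + (norm b)\<^sup>2 + 2 * Re (cinner a b)"
proof -
  have "cinner (a + b) (a + b) = cinner a a + cinner b b + (cinner a b + cnj (cinner a b))"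
    by (simp add: cinner_add_left cinner_add_right cinner_commute[of a b])
  then have "Re (cinner (a + b) (a + b)) = Re (cinner a a) + Re (cinner b b) + 2 * Re (cinner a b)"
    by simp
  then show ?thesis
    by (simp add: Re_cinner_self)
qed

lemma norm_diff_square_cinner:
  "(norm (a - b))\<^sup>2 = (norm a)\<^sup>2 + (norm b)\<^sup>2 - 2 * Re (cinner a b)"
  using norm_add_square_cinner[of a "- b"] cinner_diff_right[of a 0 b] by simp

lemma parallelogram_law:
  fixes a b :: "'a::chilbert_space"
  shows "(norm (a + b))\<^sup>2 + (norm (a - b))\<^sup>2 = 2 * (norm a)\<^sup>2 + 2 * (norm b)\<^sup>2"
  using norm_add_square_cinner[of a b] norm_diff_square_cinner[of a b] by simp

lemma norm_cscale: "norm (cscale c x) = cmod c * norm x"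
proof -
  have "cinner (cscale c x) (cscale c x) = (c * cnj c) * cinner x x"
    by (simp add: cinner_cscale_left cinner_cscale_right)
  also have "\<dots> = complex_of_real ((cmod c * norm x)\<^sup>2)"
    using complex_norm_square[of c] by (simp add: cinner_self_norm power_mult_distrib)
  finally have "(norm (cscale c x))\<^sup>2 = (cmod c * norm x)\<^sup>2"
    by (simp only: cinner_self_norm of_real_eq_iff)
  then show ?thesis
    by (simp add: power2_eq_imp_eq)
qed

lemma cinner_polarization:
  "cinner h w = complex_of_real (((norm (h + w))\<^sup>2 - (norm h)\<^sup>2 - (norm w)\<^sup>2) / 2)
     + \<i> * complex_of_real (((norm (h + cscale \<i> w))\<^sup>2 - (norm h)\<^sup>2 - (norm w)\<^sup>2) / 2)"
proof -
  have re: "Re (cinner h w) = ((norm (h + w))\<^sup>2 - (norm h)\<^sup>2 - (norm w)\<^sup>2) / 2"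
    using norm_add_square_cinner[of h w] by simp
  have "Re (cinner h (cscale \<i> w)) = Im (cinner h w)"
    by (simp add: cinner_cscale_right)
  then have im: "Im (cinner h w) = ((norm (h + cscale \<i> w))\<^sup>2 - (norm h)\<^sup>2 - (norm w)\<^sup>2) / 2"
    using norm_add_square_cinner[of h "cscale \<i> w"] by (simp add: norm_cscale)
  show ?thesis
    using complex_eq[of "cinner h w"] unfolding re im .
qed

lemma continuous_on_cinner_left: "continuous_on UNIV (\<lambda>h. cinner h w)"
  by (subst cinner_polarization) (auto intro!: continuous_intros)

lemma closed_cinner_left_eq_0: "closed {h. cinner h w = 0}"
  by (intro closed_Collect_eq continuous_on_cinner_left continuous_on_const)

subsection \<open>The projection theorem\<close>

definition csubspace :: "'a::chilbert_space set \<Rightarrow> bool" where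
  "csubspace P \<longleftrightarrow> 0 \<in> P \<and> (\<forall>a\<in>P. \<forall>b\<in>P. a + b \<in> P) \<and> (\<forall>c. \<forall>a\<in>P. cscale c a \<in> P)"

lemma csubspace_imp_convex: "csubspace M \<Longrightarrow> convex M"
  unfolding csubspace_def convex_def by (metis cscale_of_real)

lemma csubspace_cinner_left_eq_0: "csubspace {h. cinner h w = 0}"
  unfolding csubspace_def by (simp add: cinner_add_left cinner_cscale_left)

lemma convex_minimizing_sequence_Cauchy:
  fixes M :: "'a::chilbert_space set"
  assumes "convex M" and mM: "\<And>n. m n \<in> M" and "0 \<le> d"
    and low: "\<And>a. a \<in> M \<Longrightarrow> d \<le> norm (z - a)"
    and mb: "\<And>n. (norm (z - m n))\<^sup>2 < d\<^sup>2 + inverse (real (Suc n))"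
  shows "Cauchy m"
proof -
  have mid: "(norm (m k - m n))\<^sup>2 < 2 * inverse (real (Suc n)) + 2 * inverse (real (Suc k))"
    for n k
  proof -
    define q where "q = (1/2) *\<^sub>R m n + (1/2) *\<^sub>R m k"
    have "q \<in> M"
      using convexD[OF \<open>convex M\<close> mM mM] by (simp add: q_def)
    have "(z - m n) + (z - m k) = 2 *\<^sub>R (z - q)"
      by (simp add: q_def algebra_simps scaleR_2)
    then have "2 * d \<le> norm ((z - m n) + (z - m k))"
      using low[OF \<open>q \<in> M\<close>] by simp
    then have "(2 * d)\<^sup>2 \<le> (norm ((z - m n) + (z - m k)))\<^sup>2"
      using \<open>0 \<le> d\<close> by (intro power_mono) auto
    then show ?thesis
      using parallelogram_law[of "z - m n" "z - m k"] mb[of n] mb[of k]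
      by (simp add: power_mult_distrib)
  qed
  show ?thesis
  proof (rule CauchyI)
    fix e :: real
    assume "0 < e"
    obtain N where N: "inverse (real (Suc N)) < e\<^sup>2 / 4"
      using reals_Archimedean[of "e\<^sup>2 / 4"] \<open>0 < e\<close> by auto
    have "norm (m i - m j) < e" if "i \<ge> N" "j \<ge> N" for i j
    proof -
      have "inverse (real (Suc i)) \<le> inverse (real (Suc N))"
        "inverse (real (Suc j)) \<le> inverse (real (Suc N))"
        using that by (auto simp: field_simps)
      then have "(norm (m i - m j))\<^sup>2 < e\<^sup>2"
        using mid[where n = j and k = i] N by linarith
      then show ?thesis
        using \<open>0 < e\<close> by (simp add: power_less_imp_less_base)
    qed
    then show "\<exists>M. \<forall>i\<ge>M. \<forall>j\<ge>M. norm (m i - m j) < e"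
      by blast
  qed
qed

lemma nearest_point_closure_convex:
  fixes M :: "'a::chilbert_space set"
  assumes "convex M" and "M \<noteq> {}"
  shows "\<exists>p\<in>closure M. \<forall>a\<in>closure M. norm (z - p) \<le> norm (z - a)"
proof -
  define d where "d = infdist z M"
  have "0 \<le> d"
    by (simp add: d_def infdist_nonneg)
  have low: "d \<le> norm (z - a)" if "a \<in> M" for a
    using infdist_le[OF that, of z] by (simp add: d_def dist_norm)
  have "\<exists>a\<in>M. (norm (z - a))\<^sup>2 < d\<^sup>2 + inverse (real (Suc n))" for n
  proof -
    have "d < sqrt (d\<^sup>2 + inverse (real (Suc n)))"
      using \<open>0 \<le> d\<close> by (simp add: real_less_rsqrt)
    then have "\<exists>a\<in>M. dist z a < sqrt (d\<^sup>2 + inverse (real (Suc n)))"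
      using \<open>M \<noteq> {}\<close> infdist_notempty[OF \<open>M \<noteq> {}\<close>]
        cINF_less_iff[of M "dist z" "sqrt (d\<^sup>2 + inverse (real (Suc n)))"]
      unfolding d_def by (metis bdd_belowI2 zero_le_dist)
    then obtain a where "a \<in> M" and a: "dist z a < sqrt (d\<^sup>2 + inverse (real (Suc n)))"
      by blast
    have "(dist z a)\<^sup>2 < d\<^sup>2 + inverse (real (Suc n))"
      using power_strict_mono[OF a, of 2] by simp
    then show ?thesis
      using \<open>a \<in> M\<close> by (auto simp: dist_norm)
  qed
  then obtain m where mM: "\<And>n. m n \<in> M"
    and mb: "\<And>n. (norm (z - m n))\<^sup>2 < d\<^sup>2 + inverse (real (Suc n))"
    by metis
  obtain p where p: "m \<longlonglongrightarrow> p"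
    using convex_minimizing_sequence_Cauchy[OF \<open>convex M\<close> mM \<open>0 \<le> d\<close> low mb]
    unfolding Cauchy_convergent_iff convergent_def by blast
  have "(\<lambda>n. (norm (z - m n))\<^sup>2) \<longlonglongrightarrow> (norm (z - p))\<^sup>2"
    by (intro tendsto_intros p)
  moreover have "(\<lambda>n. d\<^sup>2 + inverse (real (Suc n))) \<longlonglongrightarrow> d\<^sup>2 + 0"
    by (intro tendsto_intros LIMSEQ_inverse_real_of_nat)
  ultimately have "(norm (z - p))\<^sup>2 \<le> d\<^sup>2 + 0"
    by (rule LIMSEQ_le) (use mb less_imp_le in blast)
  then have "norm (z - p) \<le> d"
    using power2_le_imp_le[OF _ \<open>0 \<le> d\<close>] by simp
  then have "M \<subseteq> {a. norm (z - p) \<le> norm (z - a)}"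
    using low by force
  then have "closure M \<subseteq> {a. norm (z - p) \<le> norm (z - a)}"
    by (intro closure_minimal closed_Collect_le continuous_intros)
  moreover have "p \<in> closure M"
    unfolding closure_sequential using p mM by blast
  ultimately show ?thesis
    by blast
qed

lemma cinner_eq_0_if_norm_minimal:
  assumes minimal: "\<And>t. norm x \<le> norm (x - cscale t m)"
  shows "cinner m x = 0"
proof (cases "m = 0")
  case False
  define c where "c = cinner x m"
  define s where "s = inverse ((norm m)\<^sup>2)"
  have "0 < s"
    using False by (simp add: s_def)
  define t where "t = complex_of_real s * c"
  \<comment> \<open>\<open>t m\<close> is the projection of \<open>x\<close> onto \<open>m\<close>, which shortens \<open>x\<close> unless \<open>c = 0\<close>\<close>
  have "cnj t * c = complex_of_real (s * (cmod c)\<^sup>2)"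
    using complex_norm_square[of c] by (simp add: t_def mult.commute)
  then have re: "Re (cinner x (cscale t m)) = s * (cmod c)\<^sup>2"
    by (simp add: cinner_cscale_right c_def)
  have nm: "norm (cscale t m) = s * cmod c * norm m"
    by (simp add: norm_cscale t_def norm_mult abs_of_pos \<open>0 < s\<close>)
  have "(norm x)\<^sup>2 \<le> (norm (x - cscale t m))\<^sup>2"
    using minimal[of t] by (simp add: power_mono)
  also have "\<dots> = (norm x)\<^sup>2 + (s * cmod c * norm m)\<^sup>2 - 2 * (s * (cmod c)\<^sup>2)"
    unfolding norm_diff_square_cinner re nm ..
  also have "(s * cmod c * norm m)\<^sup>2 = s * (cmod c)\<^sup>2"
    using False by (simp add: s_def power_mult_distrib field_simps)
  finally have "c = 0"
    using \<open>0 < s\<close> by (simp add: mult_le_0_iff)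
  then show ?thesis
    by (metis c_def cinner_commute complex_cnj_zero)
qed simp

lemma exists_orthogonal_to_csubspace:
  fixes M :: "'a::chilbert_space set"
  assumes M: "csubspace M" and z: "z \<notin> closure M"
  shows "\<exists>x. x \<noteq> 0 \<and> (\<forall>m\<in>M. cinner m x = 0)"
proof -
  have "M \<noteq> {}"
    using M by (auto simp: csubspace_def)
  then obtain p where "p \<in> closure M" and p: "\<And>a. a \<in> closure M \<Longrightarrow> norm (z - p) \<le> norm (z - a)"
    using nearest_point_closure_convex[OF csubspace_imp_convex[OF M]] by blast
  then obtain s where sM: "\<And>n. s n \<in> M" and s: "s \<longlonglongrightarrow> p"
    unfolding closure_sequential by blast
  have "cinner m (z - p) = 0" if "m \<in> M" for m
  proof (rule cinner_eq_0_if_norm_minimal)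
    fix t
    have "(\<lambda>n. s n + cscale t m) \<longlonglongrightarrow> p + cscale t m"
      by (intro tendsto_intros s)
    moreover have "s n + cscale t m \<in> M" for n
      using M sM \<open>m \<in> M\<close> by (simp add: csubspace_def)
    ultimately have "p + cscale t m \<in> closure M"
      by (auto simp: closure_sequential intro!: exI[of _ "\<lambda>n. s n + cscale t m"])
    then show "norm (z - p) \<le> norm (z - p - cscale t m)"
      using p by (simp add: diff_diff_eq)
  qed
  moreover have "z - p \<noteq> 0"
    using z \<open>p \<in> closure M\<close> by auto
  ultimately show ?thesis
    by blast
qed

subsection \<open>Cyclic vectors\<close>

definition cyclic_span :: "('a::chilbert_space \<Rightarrow> 'a) \<Rightarrow> 'a \<Rightarrow> 'a set" where
  "cyclic_span A x = {(\<Sum>n<N. cscale (c n) ((A ^^ n) x)) | N c. True}"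

lemma cyclic_vector_iff_closure_cyclic_span:
  "cyclic_vector A x \<longleftrightarrow> closure (cyclic_span A x) = UNIV"
  unfolding cyclic_vector_def cyclic_span_def ..

lemma in_cyclic_spanI: "y = (\<Sum>n<N. cscale (c n) ((A ^^ n) x)) \<Longrightarrow> y \<in> cyclic_span A x"
  unfolding cyclic_span_def by blast

lemma cscale_sum: "cscale a (\<Sum>n<(N::nat). f n) = (\<Sum>n<N. cscale a (f n))"
  by (induction N) (auto simp: cscale_add_right)

lemma csubspace_cyclic_span: "csubspace (cyclic_span A x)"
  unfolding csubspace_def
proof (intro conjI ballI allI)
  show "0 \<in> cyclic_span A x"
    unfolding cyclic_span_def by (auto intro: exI[of _ 0])
next
  fix a b
  assume "a \<in> cyclic_span A x" "b \<in> cyclic_span A x"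
  then obtain N1 c1 N2 c2 where a: "a = (\<Sum>n<N1. cscale (c1 n) ((A ^^ n) x))"
    and b: "b = (\<Sum>n<N2. cscale (c2 n) ((A ^^ n) x))"
    unfolding cyclic_span_def by blast
  define c where "c n = (if n < N1 then c1 n else 0) + (if n < N2 then c2 n else 0)" for n
  have pad: "(\<Sum>n<N1+N2. cscale (if n < N' then c' n else 0) ((A ^^ n) x))
      = (\<Sum>n<N'. cscale (c' n) ((A ^^ n) x))" if "N' \<le> N1 + N2" for N' c'
    by (rule sum.mono_neutral_cong_right) (use that in auto)
  have "a + b = (\<Sum>n<N1+N2. cscale (c n) ((A ^^ n) x))"
    unfolding c_def cscale_add_left sum.distrib a b by (simp add: pad)
  then show "a + b \<in> cyclic_span A x"
    by (rule in_cyclic_spanI)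
next
  fix k a
  assume "a \<in> cyclic_span A x"
  then obtain N c where "a = (\<Sum>n<N. cscale (c n) ((A ^^ n) x))"
    unfolding cyclic_span_def by blast
  then have "cscale k a = (\<Sum>n<N. cscale (k * c n) ((A ^^ n) x))"
    by (simp add: cscale_sum cscale_cscale)
  then show "cscale k a \<in> cyclic_span A x"
    by (rule in_cyclic_spanI)
qed

lemma funpow_in_cyclic_span: "(A ^^ n) x \<in> cyclic_span A x"
proof -
  have "(A ^^ n) x = (\<Sum>k<Suc n. cscale (if k = n then 1 else 0) ((A ^^ k) x))"
    by (simp add: sum.neutral)
  then show ?thesis
    by (rule in_cyclic_spanI)
qed

lemma cyclic_span_subset:
  assumes P: "csubspace P" and "\<And>n. (A ^^ n) x \<in> P"
  shows "cyclic_span A x \<subseteq> P"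
proof
  fix h
  assume "h \<in> cyclic_span A x"
  then obtain N c where h: "h = (\<Sum>n<N. cscale (c n) ((A ^^ n) x))"
    unfolding cyclic_span_def by blast
  have "(\<Sum>n<N'. cscale (c n) ((A ^^ n) x)) \<in> P" for N'
    using P assms(2) unfolding csubspace_def by (induction N') auto
  then show "h \<in> P"
    unfolding h .
qed

lemma cyclic_vector_iff_orthogonal:
  "cyclic_vector A x \<longleftrightarrow> (\<forall>w. (\<forall>n. cinner ((A ^^ n) x) w = 0) \<longrightarrow> w = 0)"
proof
  assume cyclic: "cyclic_vector A x"
  show "\<forall>w. (\<forall>n. cinner ((A ^^ n) x) w = 0) \<longrightarrow> w = 0"
  proof (intro allI impI)
    fix w
    assume "\<forall>n. cinner ((A ^^ n) x) w = 0"
    then have "cyclic_span A x \<subseteq> {h. cinner h w = 0}"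
      by (intro cyclic_span_subset csubspace_cinner_left_eq_0) simp
    then have "closure (cyclic_span A x) \<subseteq> {h. cinner h w = 0}"
      by (rule closure_minimal[OF _ closed_cinner_left_eq_0])
    then have "cinner w w = 0"
      using cyclic unfolding cyclic_vector_iff_closure_cyclic_span by blast
    then show "w = 0"
      by simp
  qed
next
  assume orth: "\<forall>w. (\<forall>n. cinner ((A ^^ n) x) w = 0) \<longrightarrow> w = 0"
  show "cyclic_vector A x"
  proof (rule ccontr)
    assume "\<not> cyclic_vector A x"
    then obtain z where "z \<notin> closure (cyclic_span A x)"
      by (auto simp: cyclic_vector_iff_closure_cyclic_span)
    then obtain w where "w \<noteq> 0" and "\<forall>m\<in>cyclic_span A x. cinner m w = 0"
      using exists_orthogonal_to_csubspace[OF csubspace_cyclic_span] by blast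
    then show False
      using orth funpow_in_cyclic_span by blast
  qed
qed

subsection \<open>Rank-one perturbations and intertwining adjoints\<close>

definition clinear :: "('a::chilbert_space \<Rightarrow> 'b::chilbert_space) \<Rightarrow> bool" where
  "clinear f \<longleftrightarrow> (\<forall>a b. f (a + b) = f a + f b) \<and> (\<forall>c a. f (cscale c a) = cscale c (f a))"

lemma clinear_zero: "clinear f \<Longrightarrow> f 0 = 0"
  unfolding clinear_def by (metis cscale_zero_left)

lemma clinear_funpow:
  fixes f :: "'a::chilbert_space \<Rightarrow> 'a"
  shows "clinear f \<Longrightarrow> clinear (f ^^ n)"
  unfolding clinear_def by (induction n) auto

lemma is_adjoint_clinear:
  assumes "is_adjoint A B"
  shows "clinear B"
  unfolding clinear_def
proof (intro conjI allI)
  show "B (a + b) = B a + B b" for a b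
    using assms unfolding is_adjoint_def by (intro cinner_extensional) (metis cinner_add_right)
  show "B (cscale c a) = cscale c (B a)" for c a
    using assms unfolding is_adjoint_def by (intro cinner_extensional) (metis cinner_cscale_right)
qed

lemma cyclic_vector_rank_one_perturbation:
  assumes "clinear A" and "cyclic_vector A v"
  shows "cyclic_vector (\<lambda>h. A h + cscale (cinner h u) v) v"
  unfolding cyclic_vector_iff_orthogonal
proof (intro allI impI)
  define S where "S h = A h + cscale (cinner h u) v" for h
  fix w
  assume "\<forall>n. cinner (((\<lambda>h. A h + cscale (cinner h u) v) ^^ n) v) w = 0"
  then have orth: "cinner ((S ^^ n) v) w = 0" for n
    by (simp add: S_def[abs_def])
  have "clinear S"
    using \<open>clinear A\<close> unfolding clinear_def S_def
    by (simp add: cinner_add_left cinner_cscale_left cscale_add_left cscale_add_right cscale_cscale)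
  define P where "P = {h. \<forall>n. cinner ((S ^^ n) h) w = 0}"
  \<comment> \<open>\<open>P\<close> is the largest \<open>S\<close>-invariant subspace orthogonal to \<open>w\<close>\<close>
  have P: "csubspace P"
    using clinear_funpow[OF \<open>clinear S\<close>] clinear_zero[OF clinear_funpow[OF \<open>clinear S\<close>]]
    unfolding P_def csubspace_def clinear_def by (simp add: cinner_add_left cinner_cscale_left)
  have "v \<in> P"
    unfolding P_def using orth by blast
  have S_P: "S h \<in> P" if "h \<in> P" for h
  proof -
    have "cinner ((S ^^ n) (S h)) w = 0" for n
      using that[unfolded P_def, simplified, rule_format, of "Suc n"]
      by (simp only: funpow_Suc_right o_apply)
    then show ?thesis
      by (simp add: P_def)
  qed
  have A_P: "A h \<in> P" if "h \<in> P" for h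
  proof -
    have "A h = S h + cscale (- cinner h u) v"
      by (simp add: S_def cscale_minus_left)
    then show ?thesis
      using P S_P[OF that] \<open>v \<in> P\<close> unfolding csubspace_def by simp
  qed
  have "(A ^^ n) v \<in> P" for n
    by (induction n) (simp_all add: \<open>v \<in> P\<close> A_P)
  then have "\<forall>n. cinner ((A ^^ n) v) w = 0"
    unfolding P_def by (metis (mono_tags) funpow_0 mem_Collect_eq)
  then show "w = 0"
    using \<open>cyclic_vector A v\<close> by (simp add: cyclic_vector_iff_orthogonal)
qed

lemma is_adjoint_rank_one_perturbation:
  assumes "is_adjoint A As"
  shows "is_adjoint (\<lambda>y. A y + cscale (cinner y v) u) (\<lambda>h. As h + cscale (cinner h u) v)"
  unfolding is_adjoint_def
proof (intro allI)
  fix y h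
  show "cinner (A y + cscale (cinner y v) u) h = cinner y (As h + cscale (cinner h u) v)"
    using assms
    by (simp add: is_adjoint_def cinner_add_left cinner_add_right cinner_cscale_left
        cinner_cscale_right cinner_commute[of u h])
qed

lemma is_adjoint_sym: "is_adjoint A B \<Longrightarrow> is_adjoint B A"
  unfolding is_adjoint_def by (metis cinner_commute)

lemma is_adjoint_intertwining:
  assumes "is_adjoint A As" and "is_adjoint B Bs" and "is_adjoint Y Ys"
    and "\<And>x. A (Y x) = Y (B x)"
  shows "Ys (As h) = Bs (Ys h)"
proof (rule cinner_extensional)
  fix k
  have "cinner k (Ys (As h)) = cinner (A (Y k)) h"
    using assms(1,3) by (simp add: is_adjoint_def)
  also have "\<dots> = cinner k (Bs (Ys h))"
    using assms(2-4) by (simp add: is_adjoint_def)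
  finally show "cinner k (Ys (As h)) = cinner k (Bs (Ys h))" .
qed

lemma cyclic_vector_adjoint_image:
  assumes adj: "is_adjoint Y Ys" and inj: "\<And>x. Y x = 0 \<Longrightarrow> x = 0"
    and intertwine: "\<And>h. Ys (S h) = Vs (Ys h)" and "cyclic_vector S v"
  shows "cyclic_vector Vs (Ys v)"
  unfolding cyclic_vector_iff_orthogonal
proof (intro allI impI)
  fix w
  assume orth: "\<forall>n. cinner ((Vs ^^ n) (Ys v)) w = 0"
  have "(Vs ^^ n) (Ys v) = Ys ((S ^^ n) v)" for n
    by (induction n) (simp_all add: intertwine)
  then have "\<forall>n. cinner ((S ^^ n) v) (Y w) = 0"
    using orth is_adjoint_sym[OF adj] by (simp add: is_adjoint_def)
  then have "Y w = 0"
    using \<open>cyclic_vector S v\<close> by (simp add: cyclic_vector_iff_orthogonal)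
  then show "w = 0"
    by (rule inj)
qed

theorem corollary7p8:
  fixes R Rs :: "'h::chilbert_space \<Rightarrow> 'h" and u v :: 'h
    and V Vs :: "'k::chilbert_space \<Rightarrow> 'k"
    and Y :: "'k \<Rightarrow> 'h" and Ys :: "'h \<Rightarrow> 'k"
  assumes "cbounded_linear R" and "is_adjoint R Rs"
    and "cbounded_linear V" and "is_adjoint V Vs"
    and "cbounded_linear Y" and "is_adjoint Y Ys"
    and "\<forall>x. Y x = 0 \<longrightarrow> x = 0"
    and "\<forall>x. (let T = (\<lambda>y. R y + cscale (cinner y v) u) in T (Y x)) = Y (V x)"
    and "cyclic_vector Rs v"
  shows "cyclic_vector Vs (Ys v)"
proof -
  define Ts where "Ts h = Rs h + cscale (cinner h u) v" for h
  have adjoint_T: "is_adjoint (\<lambda>y. R y + cscale (cinner y v) u) Ts"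
    unfolding Ts_def[abs_def] by (rule is_adjoint_rank_one_perturbation[OF assms(2)])
  have "R (Y x) + cscale (cinner (Y x) v) u = Y (V x)" for x
    using assms(8) by (simp add: Let_def)
  then have intertwine: "Ys (Ts h) = Vs (Ys h)" for h
    by (rule is_adjoint_intertwining[OF adjoint_T assms(4,6)])
  have "cyclic_vector Ts v"
    unfolding Ts_def[abs_def]
    by (rule cyclic_vector_rank_one_perturbation[OF is_adjoint_clinear[OF assms(2)] assms(9)])
  then show ?thesis
    using assms(7) cyclic_vector_adjoint_image[where S = Ts, OF assms(6) _ intertwine] by blast
qed

end
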